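(* Let $\Lambda$ be the groupoid of Markov shifts and $E$ the set of elementary conjugacies. Then the map $\mathcal N(\Lambda,E)\to\mathrm{SSE}(\{0,1\})$ sending $X_A\mapsto A$ and $\varphi\mapsto(R_\varphi,S_\varphi)$ (so that a simplex given by elementary conjugacies $\varphi_{i,j}:X_{B_i}\to X_{B_j}$ is sent to the simplex given by the pairs $(R_{\varphi_{i,j}},S_{\varphi_{i,j}})$) is an isomorphism of simplicial sets.
   Context: Non-degenerate: no zero rows or columns. For a non-degenerate $A\in\{0,1\}^{n\times n}$, $X_A=\{x\in\{1,\dots,n\}^{\mathbb Z}:A_{x_\ell,x_{\ell+1}}=1\ \forall\ell\}$ with the left shift. $\Lambda$ has as objects the shifts $X_A$ for non-degenerate square $\{0,1\}$-matrices $A$, and as morphisms shift-commuting homeomorphisms. A conjugacy $\varphi:X_A\to X_B$ is elementary if there are $\varphi_{\mathrm{loc}}$, $\varphi^{-1}_{\mathrm{loc}}$ (on allowed pairs) with $\varphi(x)_i=\varphi_{\mathrm{loc}}(x_i,x_{i+1})$ and $\varphi^{-1}(y)_i=\varphi^{-1}_{\mathrm{loc}}(y_{i-1},y_i)$. $(R_\varphi)_{a,b}=1$ iff $\varphi_{\mathrm{loc}}(a,a')=b$ for some allowed $a'$; $(S_\varphi)_{b,a}=1$ iff $\varphi^{-1}_{\mathrm{loc}}(b,b')=a$ for some allowed $b'$. The nerve $\mathcal N(\Lambda,E)$ is the simplicial set whose $n$-simplices are tuples of objects $(X_0,\dots,X_n)$ with morphisms $\varphi_{i,j}:X_i\to X_j$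 in $E$ ($i<j$) such that $\varphi_{j,k}\circ\varphi_{i,j}=\varphi_{i,k}$ for $i<j<k$. $\mathrm{SSE}(\{0,1\})$ has as $n$-simplices tuples $(B_0,\dots,B_n)$ of non-degenerate square $\{0,1\}$-matrices with non-degenerate $\{0,1\}$-matrices $R^{i,j},S^{i,j}$ ($i<j$), $B_i=R^{i,j}S^{i,j}$, $B_j=S^{i,j}R^{i,j}$, and for $i<j<k$: $R^{i,j}R^{j,k}=R^{i,k}$, $R^{j,k}S^{i,k}=S^{i,j}$, $S^{i,k}R^{i,j}=S^{j,k}$. Face maps in both delete a vertex. *)

theory Defs
  imports "HOL-Analysis.Analysis" "Jordan_Normal_Form.Matrix" "HOL-Library.FuncSet"
begin

text \<open>Conventions: matrices are natural-number matrices (Jordan_Normal_Form type nat mat);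
  the alphabet of an n x n matrix is 0..n-1 (0-based instead of 1..n);
  matrix products are the ordinary (integer) products.\<close>

definition zero_one_mat :: "nat mat \<Rightarrow> bool" where
  "zero_one_mat M \<longleftrightarrow> (\<forall>i<dim_row M. \<forall>j<dim_col M. M $$ (i,j) \<in> {0,1})"

definition nondeg_mat :: "nat mat \<Rightarrow> bool" where
  "nondeg_mat M \<longleftrightarrow> (\<forall>i<dim_row M. \<exists>j<dim_col M. M $$ (i,j) \<noteq> 0)
                  \<and> (\<forall>j<dim_col M. \<exists>i<dim_row M. M $$ (i,j) \<noteq> 0)"

definition obj_mat :: "nat mat \<Rightarrow> bool" where
  "obj_mat A \<longleftrightarrow> dim_col A = dim_row A \<and> 0 < dim_row A \<and> zero_one_mat A \<and> nondeg_mat A"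

definition shift_space :: "nat mat \<Rightarrow> (int \<Rightarrow> nat) set" where
  "shift_space A = {x. (\<forall>l. x l < dim_row A) \<and> (\<forall>l. A $$ (x l, x (l+1)) = 1)}"

definition left_shift :: "(int \<Rightarrow> nat) \<Rightarrow> (int \<Rightarrow> nat)" where
  "left_shift x = (\<lambda>i. x (i + 1))"

text \<open>Morphisms of Lambda from X_A to X_B: shift-commuting homeomorphisms, represented as
  functions that are extensional on X_A (i.e. undefined outside X_A).\<close>
definition conjugacy :: "nat mat \<Rightarrow> nat mat \<Rightarrow> ((int \<Rightarrow> nat) \<Rightarrow> (int \<Rightarrow> nat)) \<Rightarrow> bool" where
  "conjugacy A B \<phi> \<longleftrightarrow> \<phi> \<in> extensional (shift_space A)
     \<and> (\<exists>\<psi>. homeomorphism (shift_space A) (shift_space B) \<phi> \<psi>)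
     \<and> (\<forall>x\<in>shift_space A. \<phi> (left_shift x) = left_shift (\<phi> x))"

definition inv_conj :: "nat mat \<Rightarrow> ((int \<Rightarrow> nat) \<Rightarrow> (int \<Rightarrow> nat)) \<Rightarrow> (int \<Rightarrow> nat) \<Rightarrow> (int \<Rightarrow> nat)" where
  "inv_conj A \<phi> = inv_into (shift_space A) \<phi>"

definition elementary :: "nat mat \<Rightarrow> nat mat \<Rightarrow> ((int \<Rightarrow> nat) \<Rightarrow> (int \<Rightarrow> nat)) \<Rightarrow> bool" where
  "elementary A B \<phi> \<longleftrightarrow> conjugacy A B \<phi>
     \<and> (\<exists>f. \<forall>x\<in>shift_space A. \<forall>i. \<phi> x i = f (x i) (x (i+1)))
     \<and> (\<exists>g. \<forall>y\<in>shift_space B. \<forall>i. inv_conj A \<phi> y i = g (y (i-1)) (y i))"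

text \<open>The local rules phi_loc and (phi^-1)_loc (determined on allowed pairs).\<close>
definition loc_rule :: "nat mat \<Rightarrow> ((int \<Rightarrow> nat) \<Rightarrow> (int \<Rightarrow> nat)) \<Rightarrow> nat \<Rightarrow> nat \<Rightarrow> nat" where
  "loc_rule A \<phi> = (SOME f. \<forall>x\<in>shift_space A. \<forall>i. \<phi> x i = f (x i) (x (i+1)))"

definition inv_loc_rule :: "nat mat \<Rightarrow> nat mat \<Rightarrow> ((int \<Rightarrow> nat) \<Rightarrow> (int \<Rightarrow> nat)) \<Rightarrow> nat \<Rightarrow> nat \<Rightarrow> nat" where
  "inv_loc_rule A B \<phi> = (SOME g. \<forall>y\<in>shift_space B. \<forall>i. inv_conj A \<phi> y i = g (y (i-1)) (y i))"

definition R_of :: "nat mat \<Rightarrow> nat mat \<Rightarrow> ((int \<Rightarrow> nat) \<Rightarrow> (int \<Rightarrow> nat)) \<Rightarrow> nat mat" where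
  "R_of A B \<phi> = mat (dim_row A) (dim_row B)
     (\<lambda>(a,b). if \<exists>a'<dim_row A. A $$ (a,a') = 1 \<and> loc_rule A \<phi> a a' = b then 1 else 0)"

definition S_of :: "nat mat \<Rightarrow> nat mat \<Rightarrow> ((int \<Rightarrow> nat) \<Rightarrow> (int \<Rightarrow> nat)) \<Rightarrow> nat mat" where
  "S_of A B \<phi> = mat (dim_row B) (dim_row A)
     (\<lambda>(b,a). if \<exists>b'<dim_row B. B $$ (b,b') = 1 \<and> inv_loc_rule A B \<phi> b b' = a then 1 else 0)"

definition nerve_simplex :: "nat \<Rightarrow> nat mat list \<Rightarrow> (nat \<Rightarrow> nat \<Rightarrow> ((int \<Rightarrow> nat) \<Rightarrow> (int \<Rightarrow> nat))) \<Rightarrow> bool" where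
  "nerve_simplex n Bs \<Phi> \<longleftrightarrow> length Bs = Suc n \<and> (\<forall>i\<le>n. obj_mat (Bs ! i))
     \<and> (\<forall>i j. i < j \<and> j \<le> n \<longrightarrow> elementary (Bs ! i) (Bs ! j) (\<Phi> i j))
     \<and> (\<forall>i j k. i < j \<and> j < k \<and> k \<le> n \<longrightarrow>
           compose (shift_space (Bs ! i)) (\<Phi> j k) (\<Phi> i j) = \<Phi> i k)"

definition sse_simplex :: "nat \<Rightarrow> nat mat list \<Rightarrow> (nat \<Rightarrow> nat \<Rightarrow> nat mat) \<Rightarrow> (nat \<Rightarrow> nat \<Rightarrow> nat mat) \<Rightarrow> bool" where
  "sse_simplex n Bs R S \<longleftrightarrow> length Bs = Suc n \<and> (\<forall>i\<le>n. obj_mat (Bs ! i))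
     \<and> (\<forall>i j. i < j \<and> j \<le> n \<longrightarrow>
          R i j \<in> carrier_mat (dim_row (Bs ! i)) (dim_row (Bs ! j))
        \<and> S i j \<in> carrier_mat (dim_row (Bs ! j)) (dim_row (Bs ! i))
        \<and> zero_one_mat (R i j) \<and> zero_one_mat (S i j)
        \<and> nondeg_mat (R i j) \<and> nondeg_mat (S i j)
        \<and> Bs ! i = R i j * S i j \<and> Bs ! j = S i j * R i j)
     \<and> (\<forall>i j k. i < j \<and> j < k \<and> k \<le> n \<longrightarrow>
          R i j * R j k = R i k \<and> R j k * S i k = S i j \<and> S i k * R i j = S j k)"

end

theory Submission
  imports Defs
begin

text \<open>
An elementary conjugacy \<open>\<phi> : X\<^sub>A \<rightarrow> X\<^sub>B\<close> is the same as a pair of 2-block rules, \<open>f = \<phi>\<^sub>l\<^sub>o\<^sub>c\<close>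
and \<open>g\<close> = the rule of \<open>\<phi>\<^sup>-\<^sup>1\<close> read one step later, whose sliding block codes compose to the
shift in both orders; \<open>R\<^sub>\<phi>\<close> and \<open>S\<^sub>\<phi>\<close> are the incidence matrices of \<open>f\<close> and \<open>g\<close>.  Two
points of \<open>X\<^sub>A\<close> whose images agree at some coordinate can be spliced there, and splicing
shows that \<open>R\<close> is functorial: \<open>R\<^sub>\<phi> R\<^sub>\<kappa> = R\<^sub>\<kappa>\<^sub>\<circ>\<^sub>\<phi>\<close>.  Exchanging \<open>f\<close> and \<open>g\<close> gives the
elementary conjugacy \<open>\<sigma> \<circ> \<phi>\<^sup>-\<^sup>1\<close> with \<open>R\<close>-matrix \<open>S\<^sub>\<phi>\<close>, and the shift \<open>\<sigma>\<close> has
\<open>R\<close>-matrix \<open>A\<close>; hence \<open>A = R S\<close>, \<open>B = S R\<close> and the three simplicial identities are all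
instances of functoriality.  Conversely, for zero-one matrices \<open>A = R S\<close> says that every
allowed word \<open>a a'\<close> has exactly one middle symbol \<open>b\<close> with \<open>R(a, b) = S(b, a') = 1\<close>; these
middle symbols are the rule of an elementary conjugacy realising \<open>(R, S)\<close>, and the same
uniqueness shows that \<open>(R\<^sub>\<phi>, S\<^sub>\<phi>)\<close> determines \<open>\<phi>\<close>.
\<close>

section \<open>Block codes and splicing on Markov shifts\<close>

definition block_code :: "(nat \<Rightarrow> nat \<Rightarrow> nat) \<Rightarrow> (int \<Rightarrow> nat) \<Rightarrow> int \<Rightarrow> nat" where
  "block_code h x = (\<lambda>i. h (x i) (x (i + 1)))"

definition right_shift :: "(int \<Rightarrow> nat) \<Rightarrow> int \<Rightarrow> nat" where
  "right_shift x = (\<lambda>i. x (i - 1))"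

definition splice :: "(int \<Rightarrow> nat) \<Rightarrow> (int \<Rightarrow> nat) \<Rightarrow> int \<Rightarrow> int \<Rightarrow> nat" where
  "splice x y i = (\<lambda>l. if l \<le> i then x l else y l)"

lemma shift_spaceD:
  assumes "x \<in> shift_space A"
  shows "x i < dim_row A" "A $$ (x i, x (i + 1)) = 1"
  using assms by (auto simp: shift_space_def)

lemma reindex_in_shift_space:
  assumes "x \<in> shift_space A"
  shows "(\<lambda>i. x (i + k)) \<in> shift_space A"
proof -
  have "A $$ (x (i + k), x (i + 1 + k)) = 1" for i
    using shift_spaceD(2)[OF assms, of "i + k"] by (simp add: ac_simps)
  then show ?thesis
    using assms by (simp add: shift_space_def)
qed

lemma left_shift_in_shift_space: "x \<in> shift_space A \<Longrightarrow> left_shift x \<in> shift_space A"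
  using reindex_in_shift_space[of x A 1] by (simp add: left_shift_def)

lemma right_shift_in_shift_space: "x \<in> shift_space A \<Longrightarrow> right_shift x \<in> shift_space A"
  using reindex_in_shift_space[of x A "-1"] by (simp add: right_shift_def)

lemma left_right_shift [simp]: "left_shift (right_shift x) = x" "right_shift (left_shift x) = x"
  by (simp_all add: left_shift_def right_shift_def)

lemma block_code_left_shift: "block_code h (left_shift x) = left_shift (block_code h x)"
  by (simp add: block_code_def left_shift_def)

lemma block_code_right_shift: "block_code h (right_shift x) = right_shift (block_code h x)"
  by (simp add: block_code_def right_shift_def)

lemma block_code_fst: "block_code (\<lambda>a _. a) x = x"
  by (simp add: block_code_def)

lemma block_code_snd: "block_code (\<lambda>_ a. a) x = left_shift x"
  by (simp add: block_code_def left_shift_def)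

lemma splice_in_shift_space:
  assumes "x \<in> shift_space A" "y \<in> shift_space A" "x i = y i"
  shows "splice x y i \<in> shift_space A"
proof -
  have "A $$ (splice x y i l, splice x y i (l + 1)) = 1" for l
    using assms shift_spaceD(2)[of x A l] shift_spaceD(2)[of y A l]
    by (cases "l < i"; cases "l = i") (auto simp: splice_def)
  moreover have "splice x y i l < dim_row A" for l
    using assms by (simp add: splice_def shift_spaceD(1))
  ultimately show ?thesis
    by (simp add: shift_space_def)
qed

lemma block_code_splice:
  "x i = y i \<Longrightarrow> block_code h (splice x y i) = splice (block_code h x) (block_code h y) (i - 1)"
  by (auto simp: block_code_def splice_def)

lemma left_shift_splice: "left_shift (splice x y i) = splice (left_shift x) (left_shift y) (i - 1)"
  by (auto simp: left_shift_def splice_def)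

lemma splice_succ:
  assumes "x (i + 1) = y (i + 1)"
  shows "splice x y (i + 1) = splice x y i"
proof
  fix l
  show "splice x y (i + 1) l = splice x y i l"
    using assms by (cases "l \<le> i"; cases "l = i + 1") (auto simp: splice_def)
qed

lemma obj_mat_successor_predecessor:
  assumes "obj_mat A" "a < dim_row A"
  shows "\<exists>b<dim_row A. A $$ (a, b) = 1" "\<exists>b<dim_row A. A $$ (b, a) = 1"
proof -
  have entry: "A $$ (i, j) = 1" if "i < dim_row A" "j < dim_row A" "A $$ (i, j) \<noteq> 0" for i j
  proof -
    have "A $$ (i, j) \<in> {0, 1}"
      using assms(1) that(1,2) by (simp add: obj_mat_def zero_one_mat_def)
    then show ?thesis
      using that(3) by blast
  qed
  obtain b c where "b < dim_row A" "A $$ (a, b) \<noteq> 0" "c < dim_row A" "A $$ (c, a) \<noteq> 0"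
    using assms unfolding obj_mat_def nondeg_mat_def by fastforce
  then show "\<exists>b<dim_row A. A $$ (a, b) = 1" "\<exists>b<dim_row A. A $$ (b, a) = 1"
    using entry assms(2) by blast+
qed

lemma obj_mat_successor_predecessor_maps:
  assumes "obj_mat A"
  obtains succ pred where "\<And>c. c < dim_row A \<Longrightarrow> succ c < dim_row A \<and> A $$ (c, succ c) = 1"
    and "\<And>c. c < dim_row A \<Longrightarrow> pred c < dim_row A \<and> A $$ (pred c, c) = 1"
proof -
  have "\<forall>c. \<exists>d. c < dim_row A \<longrightarrow> d < dim_row A \<and> A $$ (c, d) = 1"
    "\<forall>c. \<exists>d. c < dim_row A \<longrightarrow> d < dim_row A \<and> A $$ (d, c) = 1"
    using obj_mat_successor_predecessor[OF assms] by blast+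
  with choice[OF this(1)] choice[OF this(2)] that show ?thesis
    by blast
qed

lemma edge_in_shift_space:
  assumes A: "obj_mat A" and "a < dim_row A" "a' < dim_row A" "A $$ (a, a') = 1"
  shows "\<exists>x\<in>shift_space A. x i = a \<and> x (i + 1) = a'"
proof -
  let ?n = "dim_row A"
  obtain succ pred where succ: "\<And>c. c < ?n \<Longrightarrow> succ c < ?n \<and> A $$ (c, succ c) = 1"
    and pred: "\<And>c. c < ?n \<Longrightarrow> pred c < ?n \<and> A $$ (pred c, c) = 1"
    using obj_mat_successor_predecessor_maps[OF A] by metis
  have iterate: "(h ^^ k) c < ?n" if "c < ?n" "\<And>c. c < ?n \<Longrightarrow> h c < ?n" for h k c
    using that by (induction k) auto
  define x where "x l = (if 0 < l then (succ ^^ nat (l - 1)) a' else (pred ^^ nat (- l)) a)" for l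
  have "x \<in> shift_space A"
    unfolding shift_space_def mem_Collect_eq
  proof safe
    fix l
    show "x l < ?n"
      using iterate[of a' succ] iterate[of a pred] assms succ pred by (simp add: x_def)
    consider "0 < l" | "l = 0" | "l < 0" by linarith
    then show "A $$ (x l, x (l + 1)) = 1"
    proof cases
      case 1
      then have "nat (l + 1 - 1) = Suc (nat (l - 1))" by simp
      then show ?thesis
        using 1 succ iterate[of a' succ] assms by (simp add: x_def)
    next
      case 2
      then show ?thesis using assms by (simp add: x_def)
    next
      case 3
      then have "nat (- l) = Suc (nat (- (l + 1)))" by simp
      then show ?thesis
        using 3 pred iterate[of a pred] assms by (simp add: x_def)
    qed
  qed
  then have "(\<lambda>l. x (l + - i)) \<in> shift_space A"
    by (rule reindex_in_shift_space)
  moreover have "x 0 = a" "x 1 = a'"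
    by (simp_all add: x_def)
  ultimately show ?thesis
    by (intro bexI[of _ "\<lambda>l. x (l + - i)"]) auto
qed

lemma continuous_on_sliding_block:
  "continuous_on S (\<lambda>x :: int \<Rightarrow> nat. \<lambda>i. h (x (i + k)) (x (i + m)))"
proof (rule continuous_on_coordinatewise_then_product)
  fix i
  let ?F = "\<lambda>x :: int \<Rightarrow> nat. h (x (i + k)) (x (i + m))"
  have open_coordinate: "open {x :: int \<Rightarrow> nat. x l = a}" for l a
  proof -
    have "open ((\<lambda>x :: int \<Rightarrow> nat. x l) -` {a})"
      by (rule open_vimage) (auto intro: continuous_on_product_coordinates open_discrete)
    then show ?thesis
      by (simp add: vimage_def)
  qed
  have "open (?F -` U)" for U
  proof -
    have "?F -` U = (\<Union>(a, b)\<in>{(a, b). h a b \<in> U}. {x. x (i + k) = a} \<inter> {x. x (i + m) = b})"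
      by auto
    moreover have "open (\<Union>(a, b)\<in>{(a, b). h a b \<in> U}. {x. x (i + k) = a} \<inter> {x. x (i + m) = b})"
      by (intro open_UN ballI) (auto intro!: open_Int open_coordinate)
    ultimately show ?thesis
      by simp
  qed
  then show "continuous_on S ?F"
    unfolding continuous_on_open_invariant by blast
qed

lemma continuous_on_block_code: "continuous_on S (block_code h)"
  using continuous_on_sliding_block[of S h 0 1] by (simp add: block_code_def[abs_def])

lemma continuous_on_right_shift_block_code: "continuous_on S (\<lambda>x. right_shift (block_code h x))"
  using continuous_on_sliding_block[of S h "-1" 0] by (simp add: block_code_def right_shift_def)

section \<open>Products of zero-one matrices\<close>

lemma mult_zero_one_mat_index:
  fixes P Q :: "nat mat"
  assumes P: "P \<in> carrier_mat m k" "zero_one_mat P" and Q: "Q \<in> carrier_mat k l" "zero_one_mat Q"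
    and "i < m" "j < l"
  shows "(P * Q) $$ (i, j) = card {b. b < k \<and> P $$ (i, b) = 1 \<and> Q $$ (b, j) = 1}"
proof -
  have "(P * Q) $$ (i, j) = (\<Sum>b\<in>{0..<k}. P $$ (i, b) * Q $$ (b, j))"
    using assms by (simp add: scalar_prod_def)
  also have "\<dots> = (\<Sum>b\<in>{0..<k}. if P $$ (i, b) = 1 \<and> Q $$ (b, j) = 1 then 1 else 0)"
  proof (rule sum.cong)
    fix b assume "b \<in> {0..<k}"
    then have "P $$ (i, b) \<in> {0, 1}" "Q $$ (b, j) \<in> {0, 1}"
      using assms by (auto simp: zero_one_mat_def)
    then show "P $$ (i, b) * Q $$ (b, j) = (if P $$ (i, b) = 1 \<and> Q $$ (b, j) = 1 then 1 else 0)"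
      by auto
  qed simp
  also have "\<dots> = card {b. b < k \<and> P $$ (i, b) = 1 \<and> Q $$ (b, j) = 1}"
    by (simp add: sum.If_cases Int_def conj_commute)
  finally show ?thesis .
qed

lemma zero_one_mat_mult_index_eq_iff:
  fixes P Q T :: "nat mat"
  assumes P: "P \<in> carrier_mat m k" "zero_one_mat P" and Q: "Q \<in> carrier_mat k l" "zero_one_mat Q"
    and T: "T \<in> carrier_mat m l" "zero_one_mat T" and ij: "i < m" "j < l"
  shows "T $$ (i, j) = (P * Q) $$ (i, j) \<longleftrightarrow>
    (T $$ (i, j) = 1 \<longleftrightarrow> (\<exists>b<k. P $$ (i, b) = 1 \<and> Q $$ (b, j) = 1)) \<and>
    (\<forall>b<k. \<forall>b'<k. P $$ (i, b) = 1 \<and> Q $$ (b, j) = 1 \<and> P $$ (i, b') = 1 \<and> Q $$ (b', j) = 1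
       \<longrightarrow> b = b')"
proof -
  define M where "M = {b. b < k \<and> P $$ (i, b) = 1 \<and> Q $$ (b, j) = 1}"
  have "T $$ (i, j) \<in> {0, 1}"
    using T ij by (simp add: zero_one_mat_def)
  moreover have "finite M"
    by (simp add: M_def)
  ultimately have "T $$ (i, j) = card M \<longleftrightarrow>
    (T $$ (i, j) = 1 \<longleftrightarrow> M \<noteq> {}) \<and> (\<forall>b\<in>M. \<forall>b'\<in>M. b = b')"
  proof (cases "M = {}")
    case False
    with \<open>finite M\<close> have pos: "0 < card M"
      and le: "card M \<le> 1 \<longleftrightarrow> (\<forall>b\<in>M. \<forall>b'\<in>M. b = b')"
      using card_le_Suc0_iff_eq[of M] by (simp_all add: card_gt_0_iff)
    have "T $$ (i, j) = card M \<longleftrightarrow> T $$ (i, j) = 1 \<and> card M \<le> 1"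
      using \<open>T $$ (i, j) \<in> {0, 1}\<close> pos by auto
    then show ?thesis
      unfolding le using False by simp
  qed (use \<open>T $$ (i, j) \<in> {0, 1}\<close> in auto)
  moreover have "M \<noteq> {} \<longleftrightarrow> (\<exists>b<k. P $$ (i, b) = 1 \<and> Q $$ (b, j) = 1)"
    by (auto simp: M_def)
  moreover have "(\<forall>b\<in>M. \<forall>b'\<in>M. b = b') \<longleftrightarrow>
    (\<forall>b<k. \<forall>b'<k. P $$ (i, b) = 1 \<and> Q $$ (b, j) = 1 \<and> P $$ (i, b') = 1 \<and> Q $$ (b', j) = 1
       \<longrightarrow> b = b')"
    by (auto simp: M_def)
  moreover have "(P * Q) $$ (i, j) = card M"
    unfolding M_def by (rule mult_zero_one_mat_index[OF P Q ij])
  ultimately show ?thesis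
    by simp
qed

lemma zero_one_mat_eq_multI:
  fixes P Q T :: "nat mat"
  assumes P: "P \<in> carrier_mat m k" "zero_one_mat P" and Q: "Q \<in> carrier_mat k l" "zero_one_mat Q"
    and T: "T \<in> carrier_mat m l" "zero_one_mat T"
    and factor: "\<And>i j. i < m \<Longrightarrow> j < l \<Longrightarrow>
      T $$ (i, j) = 1 \<longleftrightarrow> (\<exists>b<k. P $$ (i, b) = 1 \<and> Q $$ (b, j) = 1)"
    and unique: "\<And>i j b b'. \<lbrakk>i < m; j < l; b < k; b' < k; P $$ (i, b) = 1; Q $$ (b, j) = 1;
      P $$ (i, b') = 1; Q $$ (b', j) = 1\<rbrakk> \<Longrightarrow> b = b'"
  shows "T = P * Q"
proof (rule eq_matI)
  fix i j assume "i < dim_row (P * Q)" "j < dim_col (P * Q)"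
  then have ij: "i < m" "j < l"
    using P Q by auto
  show "T $$ (i, j) = (P * Q) $$ (i, j)"
    using zero_one_mat_mult_index_eq_iff[OF P Q T ij] factor[OF ij] unique[OF ij] by blast
qed (use P Q T in auto)

lemma zero_one_mat_factorD:
  fixes P Q T :: "nat mat"
  assumes P: "P \<in> carrier_mat m k" "zero_one_mat P" and Q: "Q \<in> carrier_mat k l" "zero_one_mat Q"
    and T: "T = P * Q" "zero_one_mat T" and ij: "i < m" "j < l"
  shows "T $$ (i, j) = 1 \<longleftrightarrow> (\<exists>b<k. P $$ (i, b) = 1 \<and> Q $$ (b, j) = 1)"
    and "\<lbrakk>b < k; b' < k; P $$ (i, b) = 1; Q $$ (b, j) = 1; P $$ (i, b') = 1; Q $$ (b', j) = 1\<rbrakk>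
      \<Longrightarrow> b = b'"
proof -
  have "T \<in> carrier_mat m l"
    using P Q T by simp
  then show "T $$ (i, j) = 1 \<longleftrightarrow> (\<exists>b<k. P $$ (i, b) = 1 \<and> Q $$ (b, j) = 1)"
    and "\<lbrakk>b < k; b' < k; P $$ (i, b) = 1; Q $$ (b, j) = 1; P $$ (i, b') = 1; Q $$ (b', j) = 1\<rbrakk>
      \<Longrightarrow> b = b'"
    using zero_one_mat_mult_index_eq_iff[OF P Q _ T(2) ij] T(1) by blast+
qed

lemma nondeg_mat_factors:
  fixes P Q :: "nat mat"
  assumes P: "P \<in> carrier_mat m k" and Q: "Q \<in> carrier_mat k m"
    and "nondeg_mat (P * Q)" "nondeg_mat (Q * P)"
  shows "nondeg_mat P" "nondeg_mat Q"
proof -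
  have factor: "\<exists>b<dim_col M. M $$ (i, b) \<noteq> 0 \<and> N $$ (b, j) \<noteq> 0"
    if "(M * N) $$ (i, j) \<noteq> 0" "i < dim_row M" "j < dim_col N" "dim_col M = dim_row N"
    for M N :: "nat mat" and i j
  proof -
    have "(\<Sum>b\<in>{0..<dim_col M}. M $$ (i, b) * N $$ (b, j)) \<noteq> 0"
      using that by (simp add: scalar_prod_def)
    then obtain b where "b \<in> {0..<dim_col M}" "M $$ (i, b) * N $$ (b, j) \<noteq> 0"
      using sum.not_neutral_contains_not_neutral by blast
    then show ?thesis
      by auto
  qed
  have PQ: "\<forall>i<m. \<exists>j<m. (P * Q) $$ (i, j) \<noteq> 0" "\<forall>j<m. \<exists>i<m. (P * Q) $$ (i, j) \<noteq> 0"
    using assms(3) P Q by (simp_all add: nondeg_mat_def)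
  have QP: "\<forall>i<k. \<exists>j<k. (Q * P) $$ (i, j) \<noteq> 0" "\<forall>j<k. \<exists>i<k. (Q * P) $$ (i, j) \<noteq> 0"
    using assms(4) P Q by (simp_all add: nondeg_mat_def)
  have dims: "dim_row P = m" "dim_col P = k" "dim_row Q = k" "dim_col Q = m"
    using P Q by auto
  show "nondeg_mat P" "nondeg_mat Q"
    unfolding nondeg_mat_def dims
    using PQ QP factor[of P Q] factor[of Q P] dims by metis+
qed

locale elementary_sse =
  fixes A B R S :: "nat mat"
  assumes obj: "obj_mat A" "obj_mat B"
    and R: "R \<in> carrier_mat (dim_row A) (dim_row B)" "zero_one_mat R" "nondeg_mat R"
    and S: "S \<in> carrier_mat (dim_row B) (dim_row A)" "zero_one_mat S" "nondeg_mat S"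
    and factorization: "A = R * S" "B = S * R"

context elementary_sse
begin

lemma swap: "elementary_sse B A S R"
  unfolding elementary_sse_def using obj R S factorization by blast

lemma factor_iff:
  assumes "a < dim_row A" "a' < dim_row A"
  shows "A $$ (a, a') = 1 \<longleftrightarrow> (\<exists>b<dim_row B. R $$ (a, b) = 1 \<and> S $$ (b, a') = 1)"
  using zero_one_mat_factorD(1)[OF R(1,2) S(1,2) factorization(1) _ assms] obj(1)
  by (simp add: obj_mat_def)

lemma factor_unique:
  assumes "a < dim_row A" "a' < dim_row A" "b < dim_row B" "b' < dim_row B"
    "R $$ (a, b) = 1" "S $$ (b, a') = 1" "R $$ (a, b') = 1" "S $$ (b', a') = 1"
  shows "b = b'"
  using zero_one_mat_factorD(2)[OF R(1,2) S(1,2) factorization(1) _ assms(1,2)] assms(3-) obj(1)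
  by (simp add: obj_mat_def)

end

definition local_rule_mat :: "nat mat \<Rightarrow> (nat \<Rightarrow> nat \<Rightarrow> nat) \<Rightarrow> nat \<Rightarrow> nat mat" where
  "local_rule_mat A h m = mat (dim_row A) m
     (\<lambda>(a, b). if \<exists>a'<dim_row A. A $$ (a, a') = 1 \<and> h a a' = b then 1 else 0)"

lemma R_of_eq_local_rule_mat: "R_of A B \<phi> = local_rule_mat A (loc_rule A \<phi>) (dim_row B)"
  by (simp add: R_of_def local_rule_mat_def)

lemma S_of_eq_local_rule_mat: "S_of A B \<phi> = local_rule_mat B (inv_loc_rule A B \<phi>) (dim_row A)"
  by (simp add: S_of_def local_rule_mat_def)

lemma local_rule_mat_carrier: "local_rule_mat A h m \<in> carrier_mat (dim_row A) m"
  by (simp add: local_rule_mat_def)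

lemma zero_one_local_rule_mat: "zero_one_mat (local_rule_mat A h m)"
  by (simp add: local_rule_mat_def zero_one_mat_def)

lemma local_rule_mat_cong:
  assumes "\<And>a a'. a < dim_row A \<Longrightarrow> a' < dim_row A \<Longrightarrow> A $$ (a, a') = 1 \<Longrightarrow> h a a' = h' a a'"
  shows "local_rule_mat A h m = local_rule_mat A h' m"
  unfolding local_rule_mat_def
  by (rule cong_mat) (simp_all add: assms cong: conj_cong)

lemma local_rule_mat_eq_1_iff:
  assumes A: "obj_mat A" and "a < dim_row A" "b < m"
  shows "local_rule_mat A h m $$ (a, b) = 1 \<longleftrightarrow> (\<exists>x\<in>shift_space A. x i = a \<and> block_code h x i = b)"
proof -
  have "(\<exists>a'<dim_row A. A $$ (a, a') = 1 \<and> h a a' = b) \<longleftrightarrow>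
        (\<exists>x\<in>shift_space A. x i = a \<and> block_code h x i = b)"
  proof
    assume "\<exists>a'<dim_row A. A $$ (a, a') = 1 \<and> h a a' = b"
    then obtain a' where a': "a' < dim_row A" "A $$ (a, a') = 1" "h a a' = b"
      by blast
    then obtain x where "x \<in> shift_space A" "x i = a" "x (i + 1) = a'"
      using edge_in_shift_space[OF A \<open>a < dim_row A\<close>] by blast
    then show "\<exists>x\<in>shift_space A. x i = a \<and> block_code h x i = b"
      using a' by (auto simp: block_code_def)
  next
    assume "\<exists>x\<in>shift_space A. x i = a \<and> block_code h x i = b"
    then obtain x where "x \<in> shift_space A" "x i = a" "block_code h x i = b"
      by blast
    then show "\<exists>a'<dim_row A. A $$ (a, a') = 1 \<and> h a a' = b"
      using shift_spaceD[of x A] by (auto simp: block_code_def)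
  qed
  then show ?thesis
    using assms by (simp add: local_rule_mat_def)
qed

lemma local_rule_mat_fst:
  assumes "obj_mat A"
  shows "local_rule_mat A (\<lambda>a _. a) (dim_row A) = 1\<^sub>m (dim_row A)"
proof (rule eq_matI)
  fix a b assume "a < dim_row (1\<^sub>m (dim_row A))" "b < dim_col (1\<^sub>m (dim_row A))"
  then have ab: "a < dim_row A" "b < dim_row A"
    by simp_all
  then have "(\<exists>a'<dim_row A. A $$ (a, a') = 1 \<and> a = b) \<longleftrightarrow> a = b"
    using obj_mat_successor_predecessor(1)[OF assms] by blast
  then show "local_rule_mat A (\<lambda>a _. a) (dim_row A) $$ (a, b) = 1\<^sub>m (dim_row A) $$ (a, b)"
    using ab by (simp add: local_rule_mat_def)
qed (simp_all add: local_rule_mat_def)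

lemma local_rule_mat_snd:
  assumes "obj_mat A"
  shows "local_rule_mat A (\<lambda>_ a'. a') (dim_row A) = A"
proof (rule eq_matI)
  have sq: "dim_col A = dim_row A"
    using assms by (simp add: obj_mat_def)
  fix a b assume "a < dim_row A" "b < dim_col A"
  then have ab: "a < dim_row A" "b < dim_row A"
    using sq by simp_all
  then have "A $$ (a, b) \<in> {0, 1}"
    using assms by (simp add: obj_mat_def zero_one_mat_def)
  moreover have "(\<exists>a'<dim_row A. A $$ (a, a') = 1 \<and> a' = b) \<longleftrightarrow> A $$ (a, b) = 1"
    using ab by blast
  ultimately show "local_rule_mat A (\<lambda>_ a'. a') (dim_row A) $$ (a, b) = A $$ (a, b)"
    using ab by (auto simp: local_rule_mat_def)
qed (use assms in \<open>simp_all add: local_rule_mat_def obj_mat_def\<close>)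

section \<open>Elementary conjugacies as pairs of 2-block rules\<close>

lemma elementary_inverse:
  assumes "elementary A B \<phi>"
  shows "x \<in> shift_space A \<Longrightarrow> \<phi> x \<in> shift_space B"
    and "y \<in> shift_space B \<Longrightarrow> inv_conj A \<phi> y \<in> shift_space A"
    and "x \<in> shift_space A \<Longrightarrow> inv_conj A \<phi> (\<phi> x) = x"
    and "y \<in> shift_space B \<Longrightarrow> \<phi> (inv_conj A \<phi> y) = y"
proof -
  obtain \<psi> where \<psi>: "homeomorphism (shift_space A) (shift_space B) \<phi> \<psi>"
    using assms by (auto simp: elementary_def conjugacy_def)
  then have onto: "\<phi> ` shift_space A = shift_space B"
    and left_inverse: "\<And>x. x \<in> shift_space A \<Longrightarrow> \<psi> (\<phi> x) = x"
    by (simp_all add: homeomorphism_def)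
  have inj: "inj_on \<phi> (shift_space A)"
    by (rule inj_on_inverseI[of _ \<psi>]) (rule left_inverse)
  show "x \<in> shift_space A \<Longrightarrow> \<phi> x \<in> shift_space B"
    using onto by blast
  show "y \<in> shift_space B \<Longrightarrow> inv_conj A \<phi> y \<in> shift_space A"
    unfolding inv_conj_def using onto by (metis inv_into_into)
  show "x \<in> shift_space A \<Longrightarrow> inv_conj A \<phi> (\<phi> x) = x"
    unfolding inv_conj_def using inj by (rule inv_into_f_f)
  show "y \<in> shift_space B \<Longrightarrow> \<phi> (inv_conj A \<phi> y) = y"
    unfolding inv_conj_def using onto by (metis f_inv_into_f)
qed

lemma loc_rule_eq:
  assumes "elementary A B \<phi>" "x \<in> shift_space A"
  shows "\<phi> x = block_code (loc_rule A \<phi>) x"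
proof -
  have "\<exists>h. \<forall>x\<in>shift_space A. \<forall>i. \<phi> x i = h (x i) (x (i + 1))"
    using assms(1) by (simp add: elementary_def)
  then have "\<forall>x\<in>shift_space A. \<forall>i. \<phi> x i = loc_rule A \<phi> (x i) (x (i + 1))"
    unfolding loc_rule_def by (rule someI_ex)
  then show ?thesis
    unfolding block_code_def using assms(2) by blast
qed

lemma inv_loc_rule_eq:
  assumes "elementary A B \<phi>" "y \<in> shift_space B"
  shows "inv_conj A \<phi> y = right_shift (block_code (inv_loc_rule A B \<phi>) y)"
proof -
  have "\<exists>h. \<forall>y\<in>shift_space B. \<forall>i. inv_conj A \<phi> y i = h (y (i - 1)) (y i)"
    using assms(1) by (simp add: elementary_def)
  then have "\<forall>y\<in>shift_space B. \<forall>i. inv_conj A \<phi> y i = inv_loc_rule A B \<phi> (y (i - 1)) (y i)"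
    unfolding inv_loc_rule_def by (rule someI_ex)
  then show ?thesis
    unfolding block_code_def right_shift_def using assms(2) by fastforce
qed

lemma elementary_eq_restrict_block_code:
  assumes "elementary A B \<phi>"
  shows "\<phi> = restrict (block_code (loc_rule A \<phi>)) (shift_space A)"
proof
  fix x
  show "\<phi> x = restrict (block_code (loc_rule A \<phi>)) (shift_space A) x"
  proof (cases "x \<in> shift_space A")
    case True
    then show ?thesis
      using loc_rule_eq[OF assms True] by simp
  next
    case False
    have "\<phi> \<in> extensional (shift_space A)"
      using assms by (simp add: elementary_def conjugacy_def)
    from extensional_arb[OF this False] show ?thesis
      using False by simp
  qed
qed

text \<open>
  The rules of an elementary conjugacy: \<open>f = \<phi>\<^sub>l\<^sub>o\<^sub>c\<close> and \<open>g = (\<phi>\<^sup>-\<^sup>1)\<^sub>l\<^sub>o\<^sub>c\<close>, the latter read one step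
  later so that both sliding block codes look at positions \<open>i, i + 1\<close>; the conjugacy is
  \<open>block_code f\<close> and its inverse is \<open>right_shift \<circ> block_code g\<close>.
\<close>

locale elementary_rules =
  fixes A B :: "nat mat" and f g :: "nat \<Rightarrow> nat \<Rightarrow> nat"
  assumes obj_mat_source: "obj_mat A" and obj_mat_target: "obj_mat B"
    and code_in: "\<And>x. x \<in> shift_space A \<Longrightarrow> block_code f x \<in> shift_space B"
    and inv_code_in: "\<And>y. y \<in> shift_space B \<Longrightarrow> block_code g y \<in> shift_space A"
    and inv_code_code: "\<And>x. x \<in> shift_space A \<Longrightarrow> block_code g (block_code f x) = left_shift x"
    and code_inv_code: "\<And>y. y \<in> shift_space B \<Longrightarrow> block_code f (block_code g y) = left_shift y"
begin

lemma swap: "elementary_rules B A g f"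
  by unfold_locales (simp_all add: obj_mat_source obj_mat_target code_in inv_code_in
      inv_code_code code_inv_code)

lemma code_inj:
  assumes "x \<in> shift_space A" "x' \<in> shift_space A" "block_code f x = block_code f x'"
  shows "x = x'"
proof -
  have "left_shift x = left_shift x'"
    using assms inv_code_code by metis
  then show ?thesis
    by (metis left_right_shift(2))
qed

lemma code_preimage:
  assumes "y \<in> shift_space B"
  shows "right_shift (block_code g y) \<in> shift_space A"
    and "block_code f (right_shift (block_code g y)) = y"
  using assms by (simp_all add: inv_code_in right_shift_in_shift_space block_code_right_shift
      code_inv_code)

text \<open>The points need not agree at \<open>i\<close>: the inverse code maps the splice of the images to
  the splice of the points.\<close>

lemma splice_at_image:
  assumes x: "x \<in> shift_space A" and x': "x' \<in> shift_space A"
    and eq: "block_code f x i = block_code f x' i"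
  shows "splice x x' i \<in> shift_space A"
    and "block_code f (splice x x' i) = splice (block_code f x) (block_code f x') i"
proof -
  define y where "y = splice (block_code f x) (block_code f x') i"
  have y: "y \<in> shift_space B"
    unfolding y_def by (rule splice_in_shift_space[OF code_in[OF x] code_in[OF x'] eq])
  have "block_code g y = left_shift (splice x x' i)"
    unfolding y_def block_code_splice[of "block_code f x" i "block_code f x'", OF eq] left_shift_splice
    using x x' by (simp add: inv_code_code)
  then have "splice x x' i = right_shift (block_code g y)"
    by simp
  then show "splice x x' i \<in> shift_space A"
    and "block_code f (splice x x' i) = splice (block_code f x) (block_code f x') i"
    using code_preimage[OF y] by (simp_all add: y_def)
qed

lemma inv_conj_restrict_code:
  assumes "y \<in> shift_space B"
  shows "inv_conj A (restrict (block_code f) (shift_space A)) y = right_shift (block_code g y)"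
  unfolding inv_conj_def
proof (rule inv_into_f_eq)
  show "inj_on (restrict (block_code f) (shift_space A)) (shift_space A)"
    by (rule inj_onI) (simp add: code_inj)
qed (use code_preimage[OF assms] in simp_all)

lemma elementary: "elementary A B (restrict (block_code f) (shift_space A))"
  unfolding elementary_def conjugacy_def
proof (intro conjI)
  let ?\<phi> = "restrict (block_code f) (shift_space A)"
  have "homeomorphism (shift_space A) (shift_space B) ?\<phi> (\<lambda>y. right_shift (block_code g y))"
  proof (rule homeomorphismI)
    show "continuous_on (shift_space A) ?\<phi>"
      by (rule continuous_on_eq[OF continuous_on_block_code]) simp
  qed (auto simp: continuous_on_right_shift_block_code code_in code_preimage inv_code_code)
  then show "\<exists>\<psi>. homeomorphism (shift_space A) (shift_space B) ?\<phi> \<psi>"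
    by blast
  show "\<exists>h. \<forall>x\<in>shift_space A. \<forall>i. ?\<phi> x i = h (x i) (x (i + 1))"
    by (rule exI[of _ f]) (simp add: block_code_def)
  show "\<exists>h. \<forall>y\<in>shift_space B. \<forall>i. inv_conj A ?\<phi> y i = h (y (i - 1)) (y i)"
    by (rule exI[of _ g]) (simp add: inv_conj_restrict_code block_code_def right_shift_def)
qed (simp_all add: left_shift_in_shift_space block_code_left_shift)

lemma R_of_restrict_code:
  "R_of A B (restrict (block_code f) (shift_space A)) = local_rule_mat A f (dim_row B)"
  unfolding R_of_eq_local_rule_mat
proof (rule local_rule_mat_cong)
  fix a a' assume "a < dim_row A" "a' < dim_row A" "A $$ (a, a') = 1"
  then obtain x where x: "x \<in> shift_space A" "x 0 = a" "x 1 = a'"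
    using edge_in_shift_space[OF obj_mat_source, of a a' 0] by auto
  have "block_code (loc_rule A (restrict (block_code f) (shift_space A))) x = block_code f x"
    using loc_rule_eq[OF elementary x(1)] x(1) by simp
  from fun_cong[OF this, of 0] x
  show "loc_rule A (restrict (block_code f) (shift_space A)) a a' = f a a'"
    by (simp add: block_code_def)
qed

lemma S_of_restrict_code:
  "S_of A B (restrict (block_code f) (shift_space A)) = local_rule_mat B g (dim_row A)"
  unfolding S_of_eq_local_rule_mat
proof (rule local_rule_mat_cong)
  fix b b' assume "b < dim_row B" "b' < dim_row B" "B $$ (b, b') = 1"
  then obtain y where y: "y \<in> shift_space B" "y 0 = b" "y 1 = b'"
    using edge_in_shift_space[OF obj_mat_target, of b b' 0] by auto
  have "right_shift (block_code (inv_loc_rule A B (restrict (block_code f) (shift_space A))) y) =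
        right_shift (block_code g y)"
    using inv_loc_rule_eq[OF elementary y(1)] inv_conj_restrict_code[OF y(1)] by simp
  from fun_cong[OF this, of 1] y
  show "inv_loc_rule A B (restrict (block_code f) (shift_space A)) b b' = g b b'"
    by (simp add: block_code_def right_shift_def)
qed

end

section \<open>Functoriality of the \<open>R\<close>-matrix\<close>

locale composable_rules = AB: elementary_rules A B f g + BC: elementary_rules B C f' g'
  for A B C :: "nat mat" and f g f' g' :: "nat \<Rightarrow> nat \<Rightarrow> nat" +
  fixes f'' :: "nat \<Rightarrow> nat \<Rightarrow> nat"
  assumes comp: "\<And>x. x \<in> shift_space A \<Longrightarrow> block_code f'' x = block_code f' (block_code f x)"
begin

lemma path_lifts:
  assumes bounds: "a < dim_row A" "b < dim_row B" "c < dim_row C"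
    and edges: "local_rule_mat A f (dim_row B) $$ (a, b) = 1" "local_rule_mat B f' (dim_row C) $$ (b, c) = 1"
  shows "\<exists>u\<in>shift_space A. u 0 = a \<and> block_code f u 0 = b \<and> block_code f'' u 0 = c"
proof -
  obtain x where x: "x \<in> shift_space A" "x 0 = a" "block_code f x 0 = b"
    using local_rule_mat_eq_1_iff[OF AB.obj_mat_source bounds(1,2), where i = 0] edges(1) by blast
  obtain y where y: "y \<in> shift_space B" "y 0 = b" "block_code f' y 0 = c"
    using local_rule_mat_eq_1_iff[OF BC.obj_mat_source bounds(2,3), where i = 0] edges(2) by blast
  define x' where "x' = right_shift (block_code g y)"
  have x': "x' \<in> shift_space A" "block_code f x' = y"
    unfolding x'_def by (rule AB.code_preimage[OF y(1)])+
  define u where "u = splice x x' 0"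
  have u: "u \<in> shift_space A" "block_code f u = splice (block_code f x) y 0"
    using AB.splice_at_image[OF x(1) x'(1)] x y x' by (simp_all add: u_def)
  have "block_code f'' u = block_code f' (splice (block_code f x) y 0)"
    using comp[OF u(1)] u(2) by simp
  also have "\<dots> = splice (block_code f' (block_code f x)) (block_code f' y) (0 - 1)"
    by (rule block_code_splice) (simp add: x y)
  finally have "block_code f'' u 0 = c"
    using y by (simp add: splice_def)
  moreover have "u 0 = a" "block_code f u 0 = b"
    using x u by (simp_all add: u_def splice_def)
  ultimately show ?thesis
    using u(1) by blast
qed

lemma middle_symbol_unique:
  assumes u: "u \<in> shift_space A" and u': "u' \<in> shift_space A"
    and "u 0 = u' 0" and "block_code f'' u 0 = block_code f'' u' 0"
  shows "block_code f u 0 = block_code f u' 0"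
proof -
  define s where "s = splice u u' 0"
  have s: "s \<in> shift_space A"
    unfolding s_def by (rule splice_in_shift_space[OF u u' \<open>u 0 = u' 0\<close>])
  have "block_code f' (block_code f u) 0 = block_code f' (block_code f u') 0"
    using comp[OF u] comp[OF u'] assms(4) by simp
  note v = BC.splice_at_image[OF AB.code_in[OF u] AB.code_in[OF u'] this]
  have shift: "splice (block_code f'' u) (block_code f'' u') (-1 + 1) =
      splice (block_code f'' u) (block_code f'' u') (-1)"
    by (rule splice_succ) (simp add: assms(4))
  \<comment> \<open>the image of \<open>s\<close> and the splice at 0 of the images of \<open>u\<close>, \<open>u'\<close> have the same image
    under the injective code of \<open>f'\<close>\<close>
  have "block_code f' (block_code f s) = block_code f'' s"
    by (rule comp[OF s, symmetric])
  also have "\<dots> = splice (block_code f'' u) (block_code f'' u') (0 - 1)"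
    unfolding s_def by (rule block_code_splice) (simp add: \<open>u 0 = u' 0\<close>)
  also have "\<dots> = splice (block_code f' (block_code f u)) (block_code f' (block_code f u')) 0"
    using shift comp[OF u] comp[OF u'] by simp
  also have "\<dots> = block_code f' (splice (block_code f u) (block_code f u') 0)"
    by (rule v(2)[symmetric])
  finally have "block_code f s = splice (block_code f u) (block_code f u') 0"
    by (rule BC.code_inj[OF AB.code_in[OF s] v(1)])
  from fun_cong[OF this, of 0] have "block_code f s 0 = block_code f u 0"
    by (simp add: splice_def)
  moreover have "block_code f s = splice (block_code f u) (block_code f u') (0 - 1)"
    unfolding s_def by (rule block_code_splice) (simp add: \<open>u 0 = u' 0\<close>)
  from fun_cong[OF this, of 0] have "block_code f s 0 = block_code f u' 0"
    by (simp add: splice_def)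
  ultimately show ?thesis
    by simp
qed

lemma mult_eq:
  "local_rule_mat A f (dim_row B) * local_rule_mat B f' (dim_row C) = local_rule_mat A f'' (dim_row C)"
proof (rule sym, rule zero_one_mat_eq_multI)
  let ?R = "local_rule_mat A f (dim_row B)" and ?R' = "local_rule_mat B f' (dim_row C)"
    and ?R'' = "local_rule_mat A f'' (dim_row C)"
  note R = local_rule_mat_eq_1_iff[OF AB.obj_mat_source, where i = 0]
  note R' = local_rule_mat_eq_1_iff[OF BC.obj_mat_source, where i = 0]
  fix a c assume ac: "a < dim_row A" "c < dim_row C"
  show "?R'' $$ (a, c) = 1 \<longleftrightarrow> (\<exists>b<dim_row B. ?R $$ (a, b) = 1 \<and> ?R' $$ (b, c) = 1)"
  proof
    assume "?R'' $$ (a, c) = 1"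
    then obtain x where x: "x \<in> shift_space A" "x 0 = a" "block_code f'' x 0 = c"
      using R[OF ac] by blast
    have y: "block_code f x \<in> shift_space B"
      by (rule AB.code_in[OF x(1)])
    then have "block_code f x 0 < dim_row B"
      by (rule shift_spaceD)
    moreover have "?R $$ (a, block_code f x 0) = 1"
      using R[OF ac(1) \<open>block_code f x 0 < dim_row B\<close>] x by blast
    moreover have "block_code f' (block_code f x) 0 = c"
      using comp[OF x(1)] x(3) by simp
    then have "?R' $$ (block_code f x 0, c) = 1"
      using R'[OF \<open>block_code f x 0 < dim_row B\<close> ac(2)] y by blast
    ultimately show "\<exists>b<dim_row B. ?R $$ (a, b) = 1 \<and> ?R' $$ (b, c) = 1"
      by blast
  next
    assume "\<exists>b<dim_row B. ?R $$ (a, b) = 1 \<and> ?R' $$ (b, c) = 1"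
    then obtain u where "u \<in> shift_space A" "u 0 = a" "block_code f'' u 0 = c"
      using path_lifts ac by blast
    then show "?R'' $$ (a, c) = 1"
      using R[OF ac] by blast
  qed
next
  fix a c b b'
  assume "a < dim_row A" "c < dim_row C" "b < dim_row B" "b' < dim_row B"
    and "local_rule_mat A f (dim_row B) $$ (a, b) = 1" "local_rule_mat B f' (dim_row C) $$ (b, c) = 1"
    and "local_rule_mat A f (dim_row B) $$ (a, b') = 1" "local_rule_mat B f' (dim_row C) $$ (b', c) = 1"
  then obtain u u' where u: "u \<in> shift_space A" "u 0 = a" "block_code f u 0 = b" "block_code f'' u 0 = c"
    and u': "u' \<in> shift_space A" "u' 0 = a" "block_code f u' 0 = b'" "block_code f'' u' 0 = c"
    using path_lifts[of a b c] path_lifts[of a b' c] by blast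
  then show "b = b'"
    using middle_symbol_unique[OF u(1) u'(1)] by simp
qed (simp_all add: local_rule_mat_carrier zero_one_local_rule_mat)

end

lemma local_rule_mat_mult:
  assumes "elementary_rules A B f g" "elementary_rules B C f' g'"
    and "\<And>x. x \<in> shift_space A \<Longrightarrow> block_code f'' x = block_code f' (block_code f x)"
  shows "local_rule_mat A f (dim_row B) * local_rule_mat B f' (dim_row C) = local_rule_mat A f'' (dim_row C)"
proof -
  interpret composable_rules A B C f g f' g' f''
    by (intro composable_rules.intro composable_rules_axioms.intro assms)
  show ?thesis
    by (rule mult_eq)
qed

context elementary_rules
begin

lemma local_rule_mats_at_point:
  assumes "x \<in> shift_space A"
  shows "local_rule_mat A f (dim_row B) $$ (x i, block_code f x i) = 1"
    and "local_rule_mat B g (dim_row A) $$ (block_code f x i, x (i + 1)) = 1"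
proof -
  have y: "block_code f x \<in> shift_space B"
    by (rule code_in[OF assms])
  show "local_rule_mat A f (dim_row B) $$ (x i, block_code f x i) = 1"
    using local_rule_mat_eq_1_iff[OF obj_mat_source shift_spaceD(1)[OF assms] shift_spaceD(1)[OF y]]
      assms by blast
  have "block_code g (block_code f x) i = x (i + 1)"
    using inv_code_code[OF assms] by (simp add: left_shift_def)
  then show "local_rule_mat B g (dim_row A) $$ (block_code f x i, x (i + 1)) = 1"
    using local_rule_mat_eq_1_iff[OF obj_mat_target shift_spaceD(1)[OF y] shift_spaceD(1)[OF assms]]
      y by blast
qed

text \<open>\<open>A = R S\<close> is functoriality for \<open>\<phi>\<close> followed by \<open>\<sigma> \<circ> \<phi>\<^sup>-\<^sup>1\<close>, whose composite is the shift.\<close>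

lemma factorization: "A = local_rule_mat A f (dim_row B) * local_rule_mat B g (dim_row A)"
proof -
  have "local_rule_mat A f (dim_row B) * local_rule_mat B g (dim_row A) =
        local_rule_mat A (\<lambda>_ a'. a') (dim_row A)"
    by (rule local_rule_mat_mult[OF elementary_rules_axioms swap])
      (simp add: inv_code_code block_code_snd)
  then show ?thesis
    using local_rule_mat_snd[OF obj_mat_source] by simp
qed

lemma elementary_sse: "elementary_sse A B (local_rule_mat A f (dim_row B)) (local_rule_mat B g (dim_row A))"
proof -
  interpret swap: elementary_rules B A g f
    by (rule swap)
  let ?R = "local_rule_mat A f (dim_row B)" and ?S = "local_rule_mat B g (dim_row A)"
  have "nondeg_mat (?R * ?S)" "nondeg_mat (?S * ?R)"
    using obj_mat_source obj_mat_target factorization swap.factorization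
    by (simp_all add: obj_mat_def)
  then have "nondeg_mat ?R" "nondeg_mat ?S"
    using nondeg_mat_factors[OF local_rule_mat_carrier local_rule_mat_carrier] by blast+
  then show ?thesis
    unfolding elementary_sse_def
    using obj_mat_source obj_mat_target factorization swap.factorization
      local_rule_mat_carrier zero_one_local_rule_mat
    by blast
qed

end

text \<open>With \<open>\<phi>, \<kappa>, \<theta> = \<kappa> \<circ> \<phi>\<close> the codes of \<open>f, f', f''\<close>, the second and third identities
  are functoriality for \<open>\<kappa>\<close> followed by \<open>\<sigma> \<circ> \<theta>\<^sup>-\<^sup>1\<close> (composite \<open>\<sigma> \<circ> \<phi>\<^sup>-\<^sup>1\<close>) and for
  \<open>\<sigma> \<circ> \<theta>\<^sup>-\<^sup>1\<close> followed by \<open>\<phi>\<close> (composite \<open>\<sigma> \<circ> \<kappa>\<^sup>-\<^sup>1\<close>).\<close>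

lemma local_rule_mat_triangle:
  assumes AB: "elementary_rules A B f g" and BC: "elementary_rules B C f' g'"
    and AC: "elementary_rules A C f'' g''"
    and comp: "\<And>x. x \<in> shift_space A \<Longrightarrow> block_code f'' x = block_code f' (block_code f x)"
  shows "local_rule_mat A f (dim_row B) * local_rule_mat B f' (dim_row C) = local_rule_mat A f'' (dim_row C)"
    and "local_rule_mat B f' (dim_row C) * local_rule_mat C g'' (dim_row A) = local_rule_mat B g (dim_row A)"
    and "local_rule_mat C g'' (dim_row A) * local_rule_mat A f (dim_row B) = local_rule_mat C g' (dim_row B)"
proof -
  interpret AB: elementary_rules A B f g by (rule AB)
  interpret BC: elementary_rules B C f' g' by (rule BC)
  interpret AC: elementary_rules A C f'' g'' by (rule AC)
  show "local_rule_mat A f (dim_row B) * local_rule_mat B f' (dim_row C) = local_rule_mat A f'' (dim_row C)"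
    by (rule local_rule_mat_mult[OF AB BC comp])
  show "local_rule_mat B f' (dim_row C) * local_rule_mat C g'' (dim_row A) = local_rule_mat B g (dim_row A)"
  proof (rule local_rule_mat_mult[OF BC AC.swap])
    fix y assume y: "y \<in> shift_space B"
    define x where "x = right_shift (block_code g y)"
    have x: "x \<in> shift_space A" "block_code f x = y"
      unfolding x_def by (rule AB.code_preimage[OF y])+
    then have "block_code g'' (block_code f' y) = left_shift x"
      using comp[OF x(1)] AC.inv_code_code[OF x(1)] by simp
    then show "block_code g y = block_code g'' (block_code f' y)"
      by (simp add: x_def)
  qed
  show "local_rule_mat C g'' (dim_row A) * local_rule_mat A f (dim_row B) = local_rule_mat C g' (dim_row B)"
  proof (rule local_rule_mat_mult[OF AC.swap AB])
    fix z assume z: "z \<in> shift_space C"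
    define y where "y = right_shift (block_code g' z)"
    have y: "y \<in> shift_space B" "block_code f' y = z"
      unfolding y_def by (rule BC.code_preimage[OF z])+
    define x where "x = right_shift (block_code g y)"
    have x: "x \<in> shift_space A" "block_code f x = y"
      unfolding x_def by (rule AB.code_preimage[OF y(1)])+
    have "block_code f (block_code g'' z) = left_shift y"
      using comp[OF x(1)] AC.inv_code_code[OF x(1)] x y by (simp add: block_code_left_shift)
    then show "block_code g' z = block_code f (block_code g'' z)"
      using BC.inv_code_code[OF y(1)] y by simp
  qed
qed

lemma elementary_rules_of_elementary:
  assumes \<phi>: "elementary A B \<phi>" and "obj_mat A" "obj_mat B"
  shows "elementary_rules A B (loc_rule A \<phi>) (inv_loc_rule A B \<phi>)"
proof -
  note inverse = elementary_inverse[OF \<phi>]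
  have inv_code: "block_code (inv_loc_rule A B \<phi>) y = left_shift (inv_conj A \<phi> y)"
    if "y \<in> shift_space B" for y
    using inv_loc_rule_eq[OF \<phi> that] by simp
  show ?thesis
  proof
    fix x assume x: "x \<in> shift_space A"
    then show "block_code (loc_rule A \<phi>) x \<in> shift_space B"
      using inverse(1) loc_rule_eq[OF \<phi> x, symmetric] by simp
    show "block_code (inv_loc_rule A B \<phi>) (block_code (loc_rule A \<phi>) x) = left_shift x"
      using inverse(1,3)[OF x] loc_rule_eq[OF \<phi> x, symmetric] inv_code by simp
  next
    fix y assume y: "y \<in> shift_space B"
    then show "block_code (inv_loc_rule A B \<phi>) y \<in> shift_space A"
      using inverse(2) inv_code left_shift_in_shift_space by simp
    show "block_code (loc_rule A \<phi>) (block_code (inv_loc_rule A B \<phi>) y) = left_shift y"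
      using inverse(4)[OF y] loc_rule_eq[OF \<phi> inverse(2)[OF y], symmetric] inv_code[OF y]
      by (simp add: block_code_left_shift)
  qed (use assms in simp_all)
qed

lemma elementary_eqI:
  assumes \<phi>: "elementary A B \<phi>" and \<phi>': "elementary A B \<phi>'" and obj: "obj_mat A" "obj_mat B"
    and R: "R_of A B \<phi> = R_of A B \<phi>'" and S: "S_of A B \<phi> = S_of A B \<phi>'"
  shows "\<phi> = \<phi>'"
proof -
  let ?f = "loc_rule A \<phi>" and ?g = "inv_loc_rule A B \<phi>"
    and ?f' = "loc_rule A \<phi>'" and ?g' = "inv_loc_rule A B \<phi>'"
  interpret E: elementary_rules A B ?f ?g
    by (rule elementary_rules_of_elementary[OF \<phi> obj])
  interpret E': elementary_rules A B ?f' ?g'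
    by (rule elementary_rules_of_elementary[OF \<phi>' obj])
  let ?R = "local_rule_mat A ?f (dim_row B)" and ?S = "local_rule_mat B ?g (dim_row A)"
  have R': "local_rule_mat A ?f' (dim_row B) = ?R" and S': "local_rule_mat B ?g' (dim_row A) = ?S"
    using R S by (simp_all add: R_of_eq_local_rule_mat S_of_eq_local_rule_mat)
  have "block_code ?f x = block_code ?f' x" if x: "x \<in> shift_space A" for x
  proof
    fix i
    have "zero_one_mat A"
      using obj(1) by (simp add: obj_mat_def)
    moreover have "x i < dim_row A" "x (i + 1) < dim_row A"
      using x by (simp_all add: shift_spaceD)
    moreover have "block_code ?f x i < dim_row B" "block_code ?f' x i < dim_row B"
      using E.code_in[OF x] E'.code_in[OF x] by (simp_all add: shift_spaceD)
    moreover have "?R $$ (x i, block_code ?f x i) = 1" "?S $$ (block_code ?f x i, x (i + 1)) = 1"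
      by (rule E.local_rule_mats_at_point[OF x])+
    moreover have "?R $$ (x i, block_code ?f' x i) = 1" "?S $$ (block_code ?f' x i, x (i + 1)) = 1"
      using E'.local_rule_mats_at_point[OF x, of i] R' S' by simp_all
    ultimately show "block_code ?f x i = block_code ?f' x i"
      by (rule zero_one_mat_factorD(2)[OF local_rule_mat_carrier zero_one_local_rule_mat
          local_rule_mat_carrier zero_one_local_rule_mat E.factorization])
  qed
  then have "restrict (block_code ?f) (shift_space A) = restrict (block_code ?f') (shift_space A)"
    by (rule restrict_ext)
  then show ?thesis
    by (rule box_equals[OF _ elementary_eq_restrict_block_code[OF \<phi>, symmetric]
          elementary_eq_restrict_block_code[OF \<phi>', symmetric]])
qed

section \<open>Realising an elementary strong shift equivalence\<close>

text \<open>The middle symbol of the word \<open>a a'\<close> (unique when \<open>A = R S\<close> and \<open>a a'\<close> is allowed).\<close>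

definition mid_rule :: "nat mat \<Rightarrow> nat mat \<Rightarrow> nat \<Rightarrow> nat \<Rightarrow> nat" where
  "mid_rule R S a a' = (SOME b. b < dim_col R \<and> R $$ (a, b) = 1 \<and> S $$ (b, a') = 1)"

context elementary_sse
begin

lemma mid_rule:
  assumes "a < dim_row A" "a' < dim_row A" "A $$ (a, a') = 1"
  shows "mid_rule R S a a' < dim_row B \<and> R $$ (a, mid_rule R S a a') = 1 \<and> S $$ (mid_rule R S a a', a') = 1"
proof -
  have dim: "dim_col R = dim_row B"
    using R(1) by simp
  have "\<exists>b. b < dim_col R \<and> R $$ (a, b) = 1 \<and> S $$ (b, a') = 1"
    using factor_iff[OF assms(1,2)] assms(3) dim by simp
  then have "mid_rule R S a a' < dim_col R \<and> R $$ (a, mid_rule R S a a') = 1 \<and> S $$ (mid_rule R S a a', a') = 1"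
    unfolding mid_rule_def by (rule someI_ex)
  then show ?thesis
    using dim by simp
qed

lemma mid_rule_eq:
  assumes "a < dim_row A" "a' < dim_row A" "b < dim_row B" "R $$ (a, b) = 1" "S $$ (b, a') = 1"
  shows "mid_rule R S a a' = b"
proof -
  have "A $$ (a, a') = 1"
    using factor_iff[OF assms(1,2)] assms(3-) by blast
  from mid_rule[OF assms(1,2) this] show ?thesis
    by (intro factor_unique[OF assms(1,2) _ assms(3) _ _ assms(4,5)]) simp_all
qed

lemma code_in: "x \<in> shift_space A \<Longrightarrow> block_code (mid_rule R S) x \<in> shift_space B"
proof -
  interpret swap: elementary_sse B A S R by (rule swap)
  assume x: "x \<in> shift_space A"
  have b: "mid_rule R S (x i) (x (i + 1)) < dim_row B \<and> R $$ (x i, mid_rule R S (x i) (x (i + 1))) = 1 \<and>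
    S $$ (mid_rule R S (x i) (x (i + 1)), x (i + 1)) = 1" for i
    using mid_rule shift_spaceD[OF x] by blast
  have "B $$ (mid_rule R S (x i) (x (i + 1)), mid_rule R S (x (i + 1)) (x (i + 1 + 1))) = 1" for i
    using swap.factor_iff b[of i] b[of "i + 1"] shift_spaceD(1)[OF x, of "i + 1"] by blast
  then show ?thesis
    using b by (simp add: shift_space_def block_code_def)
qed

lemma inv_code_code:
  assumes x: "x \<in> shift_space A"
  shows "block_code (mid_rule S R) (block_code (mid_rule R S) x) = left_shift x"
proof
  interpret swap: elementary_sse B A S R by (rule swap)
  fix i
  have b: "mid_rule R S (x j) (x (j + 1)) < dim_row B \<and> R $$ (x j, mid_rule R S (x j) (x (j + 1))) = 1 \<and>
    S $$ (mid_rule R S (x j) (x (j + 1)), x (j + 1)) = 1" for j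
    using mid_rule shift_spaceD[OF x] by blast
  have "mid_rule S R (mid_rule R S (x i) (x (i + 1))) (mid_rule R S (x (i + 1)) (x (i + 1 + 1))) = x (i + 1)"
    by (rule swap.mid_rule_eq) (use b[of i] b[of "i + 1"] shift_spaceD(1)[OF x, of "i + 1"] in simp_all)
  then show "block_code (mid_rule S R) (block_code (mid_rule R S) x) i = left_shift x i"
    by (simp add: block_code_def left_shift_def)
qed

lemma elementary_rules: "elementary_rules A B (mid_rule R S) (mid_rule S R)"
proof -
  interpret swap: elementary_sse B A S R by (rule swap)
  show ?thesis
    by unfold_locales (simp_all add: obj code_in swap.code_in inv_code_code swap.inv_code_code)
qed

lemma local_rule_mat_mid_rule: "local_rule_mat A (mid_rule R S) (dim_row B) = R"
proof (rule eq_matI)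
  fix a b assume "a < dim_row R" "b < dim_col R"
  then have ab: "a < dim_row A" "b < dim_row B"
    using R(1) by simp_all
  have "(\<exists>a'<dim_row A. A $$ (a, a') = 1 \<and> mid_rule R S a a' = b) \<longleftrightarrow> R $$ (a, b) = 1"
  proof
    assume "\<exists>a'<dim_row A. A $$ (a, a') = 1 \<and> mid_rule R S a a' = b"
    then obtain a' where "a' < dim_row A" "A $$ (a, a') = 1" "mid_rule R S a a' = b"
      by blast
    then show "R $$ (a, b) = 1"
      using mid_rule[OF ab(1)] by blast
  next
    assume Rab: "R $$ (a, b) = 1"
    obtain a' where a': "a' < dim_row A" "S $$ (b, a') \<noteq> 0"
      using S(1,3) ab(2) by (auto simp: nondeg_mat_def)
    moreover have "S $$ (b, a') \<in> {0, 1}"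
      using S(1,2) ab(2) a'(1) by (simp add: zero_one_mat_def)
    ultimately have "S $$ (b, a') = 1"
      by auto
    moreover have "A $$ (a, a') = 1"
      using factor_iff[OF ab(1) a'(1)] Rab ab(2) calculation by blast
    ultimately show "\<exists>a'<dim_row A. A $$ (a, a') = 1 \<and> mid_rule R S a a' = b"
      using a'(1) mid_rule_eq[OF ab(1) a'(1) ab(2) Rab] by blast
  qed
  moreover have "R $$ (a, b) \<in> {0, 1}"
    using R(1,2) ab by (simp add: zero_one_mat_def)
  ultimately show "local_rule_mat A (mid_rule R S) (dim_row B) $$ (a, b) = R $$ (a, b)"
    using ab by (auto simp: local_rule_mat_def)
qed (use R(1) in \<open>simp_all add: local_rule_mat_def\<close>)

end

lemma mid_rule_block_code_comp:
  assumes AB: "elementary_sse A B R S" and BC: "elementary_sse B C R' S'" and AC: "elementary_sse A C R'' S''"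
    and RR: "R * R' = R''" and RS: "R' * S'' = S" and SR: "S'' * R = S'"
    and x: "x \<in> shift_space A"
  shows "block_code (mid_rule R'' S'') x = block_code (mid_rule R' S') (block_code (mid_rule R S) x)"
proof
  interpret AB: elementary_sse A B R S by (rule AB)
  interpret BC: elementary_sse B C R' S' by (rule BC)
  interpret AC: elementary_sse A C R'' S'' by (rule AC)
  interpret BA: elementary_sse B A S R by (rule AB.swap)
  fix i
  let ?a = "x i" and ?a' = "x (i + 1)" and ?a'' = "x (i + 1 + 1)"
  let ?b = "mid_rule R S ?a ?a'" and ?b' = "mid_rule R S ?a' ?a''"
  let ?c = "mid_rule R' S' ?b ?b'"
  have a: "?a < dim_row A" "?a' < dim_row A" "?a'' < dim_row A"
    using x by (simp_all add: shift_spaceD)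
  have b: "?b < dim_row B" "R $$ (?a, ?b) = 1" "S $$ (?b, ?a') = 1"
    using AB.mid_rule[OF a(1,2) shift_spaceD(2)[OF x]] by simp_all
  have b': "?b' < dim_row B" "R $$ (?a', ?b') = 1" "S $$ (?b', ?a'') = 1"
    using AB.mid_rule[OF a(2,3) shift_spaceD(2)[OF x]] by simp_all
  have "B $$ (?b, ?b') = 1"
    using AB.code_in[OF x] by (simp add: shift_space_def block_code_def)
  then have c: "?c < dim_row C" "R' $$ (?b, ?c) = 1" "S' $$ (?c, ?b') = 1"
    using BC.mid_rule b(1) b'(1) by simp_all
  have "R'' $$ (?a, ?c) = 1"
    using zero_one_mat_factorD(1)[OF AB.R(1,2) BC.R(1,2) RR[symmetric] AC.R(2) a(1) c(1)] b c by blast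
  moreover have "S'' $$ (?c, ?a') = 1"
  proof -
    obtain a0 where a0: "a0 < dim_row A" "S'' $$ (?c, a0) = 1" "R $$ (a0, ?b') = 1"
      using zero_one_mat_factorD(1)[OF AC.S(1,2) AB.R(1,2) SR[symmetric] BC.S(2) c(1) b'(1)] c by blast
    have "S $$ (?b, a0) = 1"
      using zero_one_mat_factorD(1)[OF BC.R(1,2) AC.S(1,2) RS[symmetric] AB.S(2) b(1) a0(1)] c a0 by blast
    then have "a0 = ?a'"
      by (rule BA.factor_unique[OF b(1) b'(1) a0(1) a(2) _ a0(3) b(3) b'(2)])
    then show ?thesis
      using a0 by simp
  qed
  ultimately have "mid_rule R'' S'' ?a ?a' = ?c"
    by (rule AC.mid_rule_eq[OF a(1,2) c(1)])
  then show "block_code (mid_rule R'' S'') x i = block_code (mid_rule R' S') (block_code (mid_rule R S) x) i"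
    by (simp add: block_code_def)
qed

section \<open>Simplices\<close>

lemma nerve_simplexD:
  assumes "nerve_simplex n Bs \<Phi>" "i < j" "j \<le> n"
  shows "elementary (Bs ! i) (Bs ! j) (\<Phi> i j)" "obj_mat (Bs ! i)" "obj_mat (Bs ! j)"
  using assms by (simp_all add: nerve_simplex_def)

lemma nerve_simplex_block_code_comp:
  assumes nerve: "nerve_simplex n Bs \<Phi>" and ijk: "i < j" "j < k" "k \<le> n"
    and x: "x \<in> shift_space (Bs ! i)"
  shows "block_code (loc_rule (Bs ! i) (\<Phi> i k)) x =
    block_code (loc_rule (Bs ! j) (\<Phi> j k)) (block_code (loc_rule (Bs ! i) (\<Phi> i j)) x)"
proof -
  have ij: "elementary (Bs ! i) (Bs ! j) (\<Phi> i j)" and jk: "elementary (Bs ! j) (Bs ! k) (\<Phi> j k)"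
    and ik: "elementary (Bs ! i) (Bs ! k) (\<Phi> i k)"
    using nerve_simplexD(1)[OF nerve] ijk by simp_all
  have "block_code (loc_rule (Bs ! i) (\<Phi> i k)) x = \<Phi> i k x"
    by (rule loc_rule_eq[OF ik x, symmetric])
  also have "\<dots> = compose (shift_space (Bs ! i)) (\<Phi> j k) (\<Phi> i j) x"
    using nerve ijk by (simp add: nerve_simplex_def)
  also have "\<dots> = \<Phi> j k (\<Phi> i j x)"
    by (rule compose_eq[OF x])
  also have "\<dots> = block_code (loc_rule (Bs ! j) (\<Phi> j k)) (block_code (loc_rule (Bs ! i) (\<Phi> i j)) x)"
    using loc_rule_eq[OF ij x] loc_rule_eq[OF jk elementary_inverse(1)[OF ij x]] by simp
  finally show ?thesis .
qed

lemma sse_simplexI: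
  assumes "length Bs = Suc n" "\<And>i. i \<le> n \<Longrightarrow> obj_mat (Bs ! i)"
    and "\<And>i j. i < j \<Longrightarrow> j \<le> n \<Longrightarrow> elementary_sse (Bs ! i) (Bs ! j) (R i j) (S i j)"
    and "\<And>i j k. i < j \<Longrightarrow> j < k \<Longrightarrow> k \<le> n \<Longrightarrow>
      R i j * R j k = R i k \<and> R j k * S i k = S i j \<and> S i k * R i j = S j k"
  shows "sse_simplex n Bs R S"
  using assms unfolding sse_simplex_def elementary_sse_def by blast

lemma sse_simplexD:
  assumes sse: "sse_simplex n Bs R S"
  shows "length Bs = Suc n" "i \<le> n \<Longrightarrow> obj_mat (Bs ! i)"
    and "i < j \<Longrightarrow> j \<le> n \<Longrightarrow> elementary_sse (Bs ! i) (Bs ! j) (R i j) (S i j)"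
    and "i < j \<Longrightarrow> j < k \<Longrightarrow> k \<le> n \<Longrightarrow>
      R i j * R j k = R i k \<and> R j k * S i k = S i j \<and> S i k * R i j = S j k"
proof -
  show "length Bs = Suc n" "i \<le> n \<Longrightarrow> obj_mat (Bs ! i)"
    using sse by (simp_all add: sse_simplex_def)
  show "i < j \<Longrightarrow> j < k \<Longrightarrow> k \<le> n \<Longrightarrow>
      R i j * R j k = R i k \<and> R j k * S i k = S i j \<and> S i k * R i j = S j k"
    using sse by (simp add: sse_simplex_def)
  assume ij: "i < j" "j \<le> n"
  then have "i \<le> n"
    by simp
  then have "obj_mat (Bs ! i)" "obj_mat (Bs ! j)"
    using sse ij(2) unfolding sse_simplex_def by blast+
  then show "elementary_sse (Bs ! i) (Bs ! j) (R i j) (S i j)"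
    using sse ij unfolding sse_simplex_def elementary_sse_def by blast
qed

lemma sse_simplex_of_nerve_simplex:
  assumes nerve: "nerve_simplex n Bs \<Phi>"
  shows "sse_simplex n Bs (\<lambda>i j. R_of (Bs ! i) (Bs ! j) (\<Phi> i j)) (\<lambda>i j. S_of (Bs ! i) (Bs ! j) (\<Phi> i j))"
proof (rule sse_simplexI)
  have rules: "elementary_rules (Bs ! i) (Bs ! j) (loc_rule (Bs ! i) (\<Phi> i j)) (inv_loc_rule (Bs ! i) (Bs ! j) (\<Phi> i j))"
    if "i < j" "j \<le> n" for i j
    by (rule elementary_rules_of_elementary[OF nerve_simplexD[OF nerve that]])
  show "length Bs = Suc n" "\<And>i. i \<le> n \<Longrightarrow> obj_mat (Bs ! i)"
    using nerve by (simp_all add: nerve_simplex_def)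
  show "elementary_sse (Bs ! i) (Bs ! j) (R_of (Bs ! i) (Bs ! j) (\<Phi> i j)) (S_of (Bs ! i) (Bs ! j) (\<Phi> i j))"
    if "i < j" "j \<le> n" for i j
    unfolding R_of_eq_local_rule_mat S_of_eq_local_rule_mat
    by (rule elementary_rules.elementary_sse[OF rules[OF that]])
  show "R_of (Bs ! i) (Bs ! j) (\<Phi> i j) * R_of (Bs ! j) (Bs ! k) (\<Phi> j k) = R_of (Bs ! i) (Bs ! k) (\<Phi> i k) \<and>
      R_of (Bs ! j) (Bs ! k) (\<Phi> j k) * S_of (Bs ! i) (Bs ! k) (\<Phi> i k) = S_of (Bs ! i) (Bs ! j) (\<Phi> i j) \<and>
      S_of (Bs ! i) (Bs ! k) (\<Phi> i k) * R_of (Bs ! i) (Bs ! j) (\<Phi> i j) = S_of (Bs ! j) (Bs ! k) (\<Phi> j k)"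
    if ijk: "i < j" "j < k" "k \<le> n" for i j k
  proof -
    have "j \<le> n" "i < k"
      using ijk by simp_all
    then show ?thesis
      unfolding R_of_eq_local_rule_mat S_of_eq_local_rule_mat
      using local_rule_mat_triangle[OF rules[OF ijk(1)] rules[OF ijk(2,3)] rules
          nerve_simplex_block_code_comp[OF nerve ijk]] ijk(3)
      by blast
  qed
qed

lemma nerve_simplex_of_sse_simplex:
  assumes sse: "sse_simplex n Bs R S"
  shows "\<exists>\<Phi>. nerve_simplex n Bs \<Phi> \<and> (\<forall>i j. i < j \<and> j \<le> n \<longrightarrow>
    R_of (Bs ! i) (Bs ! j) (\<Phi> i j) = R i j \<and> S_of (Bs ! i) (Bs ! j) (\<Phi> i j) = S i j)"
proof -
  note sse_ij = sse_simplexD(3)[OF sse]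
  define \<Phi> where "\<Phi> i j = restrict (block_code (mid_rule (R i j) (S i j))) (shift_space (Bs ! i))" for i j
  have rules: "elementary_rules (Bs ! i) (Bs ! j) (mid_rule (R i j) (S i j)) (mid_rule (S i j) (R i j))"
    if "i < j" "j \<le> n" for i j
    by (rule elementary_sse.elementary_rules[OF sse_ij[OF that]])
  have "nerve_simplex n Bs \<Phi>"
    unfolding nerve_simplex_def
  proof (intro conjI allI impI)
    show "length Bs = Suc n" "\<And>i. i \<le> n \<Longrightarrow> obj_mat (Bs ! i)"
      using sse_simplexD(1,2)[OF sse] by simp_all
    show "elementary (Bs ! i) (Bs ! j) (\<Phi> i j)" if "i < j \<and> j \<le> n" for i j
      unfolding \<Phi>_def using elementary_rules.elementary[OF rules] that by blast
    show "compose (shift_space (Bs ! i)) (\<Phi> j k) (\<Phi> i j) = \<Phi> i k" if "i < j \<and> j < k \<and> k \<le> n" for i j k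
    proof (rule ext)
      fix x
      have ijk: "i < j" "j < k" "k \<le> n" "i < k" "j \<le> n"
        using that by auto
      have "R i j * R j k = R i k" "R j k * S i k = S i j" "S i k * R i j = S j k"
        using sse_simplexD(4)[OF sse ijk(1-3)] by simp_all
      from mid_rule_block_code_comp[OF sse_ij[OF ijk(1,5)] sse_ij[OF ijk(2,3)] sse_ij[OF ijk(4,3)] this]
      show "compose (shift_space (Bs ! i)) (\<Phi> j k) (\<Phi> i j) x = \<Phi> i k x"
        using elementary_rules.code_in[OF rules[OF ijk(1,5)]]
        by (cases "x \<in> shift_space (Bs ! i)") (simp_all add: \<Phi>_def compose_def)
    qed
  qed
  moreover have "R_of (Bs ! i) (Bs ! j) (\<Phi> i j) = R i j \<and> S_of (Bs ! i) (Bs ! j) (\<Phi> i j) = S i j"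
    if "i < j" "j \<le> n" for i j
    unfolding \<Phi>_def
    using elementary_rules.R_of_restrict_code[OF rules[OF that]]
      elementary_rules.S_of_restrict_code[OF rules[OF that]]
      elementary_sse.local_rule_mat_mid_rule[OF sse_ij[OF that]]
      elementary_sse.local_rule_mat_mid_rule[OF elementary_sse.swap[OF sse_ij[OF that]]]
    by simp
  ultimately show ?thesis
    by blast
qed

lemma identity_elementary:
  assumes A: "obj_mat A"
  shows "elementary A A (restrict id (shift_space A))"
    and "R_of A A (restrict id (shift_space A)) = 1\<^sub>m (dim_row A)"
    and "S_of A A (restrict id (shift_space A)) = A"
proof -
  interpret elementary_rules A A "\<lambda>a _. a" "\<lambda>_ a'. a'"
    by unfold_locales (simp_all add: A block_code_fst block_code_snd left_shift_in_shift_space)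
  have "restrict id (shift_space A) = restrict (block_code (\<lambda>a _. a)) (shift_space A)"
    by (rule restrict_ext) (simp add: block_code_fst)
  then show "elementary A A (restrict id (shift_space A))"
    and "R_of A A (restrict id (shift_space A)) = 1\<^sub>m (dim_row A)"
    and "S_of A A (restrict id (shift_space A)) = A"
    using elementary R_of_restrict_code S_of_restrict_code local_rule_mat_fst[OF A]
      local_rule_mat_snd[OF A] by simp_all
qed

lemma nerve_simplex_unique:
  assumes \<Phi>: "nerve_simplex n Bs \<Phi>" and \<Psi>: "nerve_simplex n Bs \<Psi>"
    and RS: "\<forall>i j. i < j \<and> j \<le> n \<longrightarrow>
      R_of (Bs ! i) (Bs ! j) (\<Phi> i j) = R_of (Bs ! i) (Bs ! j) (\<Psi> i j) \<and>
      S_of (Bs ! i) (Bs ! j) (\<Phi> i j) = S_of (Bs ! i) (Bs ! j) (\<Psi> i j)"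
    and ij: "i < j" "j \<le> n"
  shows "\<Phi> i j = \<Psi> i j"
proof (rule elementary_eqI)
  show "elementary (Bs ! i) (Bs ! j) (\<Phi> i j)" "elementary (Bs ! i) (Bs ! j) (\<Psi> i j)"
    "obj_mat (Bs ! i)" "obj_mat (Bs ! j)"
    using nerve_simplexD[OF \<Phi> ij] nerve_simplexD[OF \<Psi> ij] by simp_all
  show "R_of (Bs ! i) (Bs ! j) (\<Phi> i j) = R_of (Bs ! i) (Bs ! j) (\<Psi> i j)"
    "S_of (Bs ! i) (Bs ! j) (\<Phi> i j) = S_of (Bs ! i) (Bs ! j) (\<Psi> i j)"
    using RS ij by blast+
qed

theorem mainTheorem12:
  shows
    \<comment> \<open>the map X_A |-> A, phi |-> (R_phi, S_phi) sends n-simplices to n-simplices\<close>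
    "(\<forall>n Bs \<Phi>. nerve_simplex n Bs \<Phi> \<longrightarrow>
        sse_simplex n Bs (\<lambda>i j. R_of (Bs ! i) (Bs ! j) (\<Phi> i j)) (\<lambda>i j. S_of (Bs ! i) (Bs ! j) (\<Phi> i j)))
   \<comment> \<open>surjective in every degree\<close>
   \<and> (\<forall>n Bs R S. sse_simplex n Bs R S \<longrightarrow>
        (\<exists>\<Phi>. nerve_simplex n Bs \<Phi> \<and>
           (\<forall>i j. i < j \<and> j \<le> n \<longrightarrow>
              R_of (Bs ! i) (Bs ! j) (\<Phi> i j) = R i j \<and> S_of (Bs ! i) (Bs ! j) (\<Phi> i j) = S i j)))
   \<comment> \<open>injective in every degree\<close>
   \<and> (\<forall>n Bs \<Phi> \<Psi>. nerve_simplex n Bs \<Phi> \<and> nerve_simplex n Bs \<Psi> \<and>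
        (\<forall>i j. i < j \<and> j \<le> n \<longrightarrow>
           R_of (Bs ! i) (Bs ! j) (\<Phi> i j) = R_of (Bs ! i) (Bs ! j) (\<Psi> i j)
         \<and> S_of (Bs ! i) (Bs ! j) (\<Phi> i j) = S_of (Bs ! i) (Bs ! j) (\<Psi> i j))
        \<longrightarrow> (\<forall>i j. i < j \<and> j \<le> n \<longrightarrow> \<Phi> i j = \<Psi> i j))
   \<comment> \<open>compatibility with degeneracies: identities are elementary and go to (I, A)\<close>
   \<and> (\<forall>A. obj_mat A \<longrightarrow>
        elementary A A (restrict id (shift_space A))
      \<and> R_of A A (restrict id (shift_space A)) = 1\<^sub>m (dim_row A)
      \<and> S_of A A (restrict id (shift_space A)) = A)"
proof (intro conjI allI impI)
  fix n Bs \<Phi>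
  assume "nerve_simplex n Bs \<Phi>"
  then show "sse_simplex n Bs (\<lambda>i j. R_of (Bs ! i) (Bs ! j) (\<Phi> i j)) (\<lambda>i j. S_of (Bs ! i) (Bs ! j) (\<Phi> i j))"
    by (rule sse_simplex_of_nerve_simplex)
next
  fix n Bs R S
  assume "sse_simplex n Bs R S"
  then show "\<exists>\<Phi>. nerve_simplex n Bs \<Phi> \<and> (\<forall>i j. i < j \<and> j \<le> n \<longrightarrow>
    R_of (Bs ! i) (Bs ! j) (\<Phi> i j) = R i j \<and> S_of (Bs ! i) (Bs ! j) (\<Phi> i j) = S i j)"
    by (rule nerve_simplex_of_sse_simplex)
next
  fix n Bs \<Phi> \<Psi> i j
  assume "nerve_simplex n Bs \<Phi> \<and> nerve_simplex n Bs \<Psi> \<and> (\<forall>i j. i < j \<and> j \<le> n \<longrightarrow>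
    R_of (Bs ! i) (Bs ! j) (\<Phi> i j) = R_of (Bs ! i) (Bs ! j) (\<Psi> i j) \<and>
    S_of (Bs ! i) (Bs ! j) (\<Phi> i j) = S_of (Bs ! i) (Bs ! j) (\<Psi> i j))" and "i < j \<and> j \<le> n"
  then show "\<Phi> i j = \<Psi> i j"
    using nerve_simplex_unique[of n Bs \<Phi> \<Psi> i j] by blast
qed (use identity_elementary in blast)+

end
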